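(* For all $n\ge k\ge3$, $$\mathbf{Sf}_{n,k}(p,1)\big|_{p^1}=\binom{k-1}{2}\binom{n-1}{k}.$$
   Context: $F_1(p,q)=q$, $F_2(p,q)=q^2$ and $F_m(p,q)=qF_{m-1}(p,q)+pF_{m-2}(p,q)$ for $m\ge3$. Let $(x)_{\downarrow_{F,p,q,0}}=1$ and $(x)_{\downarrow_{F,p,q,k}}=x(x-F_1(p,q))\cdots(x-F_{k-1}(p,q))$ for $k\ge1$. Define the polynomials $\mathbf{Sf}_{n,k}(p,q)$ for $0\le k\le n$ by $x^n=\sum_{k=0}^n\mathbf{Sf}_{n,k}(p,q)(x)_{\downarrow_{F,p,q,k}}$. $\mathbf{Sf}_{n,k}(p,1)$ is the specialization $q=1$, and $f|_{p^s}$ denotes the coefficient of $p^s$ in the polynomial $f$ in $p$. *)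

theory Defs
  imports "HOL-Computational_Algebra.Polynomial"
begin

text \<open>Elements of Z[p,q] are represented as int poly poly: the outer polynomial
variable is q, coefficients are polynomials in p over the integers.\<close>

definition pvar :: "int poly poly" where "pvar = [:[:0, 1:]:]"
definition qvar :: "int poly poly" where "qvar = [:0, 1:]"

text \<open>F m (p,q); the value at m = 0 is an unused convention.\<close>
fun Fpq :: "nat \<Rightarrow> int poly poly" where
  "Fpq 0 = 0"
| "Fpq (Suc 0) = qvar"
| "Fpq (Suc (Suc 0)) = qvar ^ 2"
| "Fpq (Suc (Suc (Suc m))) = qvar * Fpq (Suc (Suc m)) + pvar * Fpq (Suc m)"

text \<open>Generalised falling factorial as a polynomial in x over Z[p,q].\<close>
definition ffac :: "nat \<Rightarrow> int poly poly poly" where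
  "ffac k = (if k = 0 then 1 else [:0, 1:] * (\<Prod>i\<in>{1..<k}. [:- Fpq i, 1:]))"

definition Sf :: "nat \<Rightarrow> nat \<Rightarrow> int poly poly" where
  "Sf n k = (THE c :: nat \<Rightarrow> int poly poly.
       monom 1 n = (\<Sum>j\<le>n. [:c j:] * ffac j) \<and> (\<forall>j>n. c j = 0)) k"

end

theory Submission
  imports Defs
begin

text \<open>Since x ffac(k) = ffac(k+1) + F_k ffac(k) and the monic polynomials
  ffac(k) form a basis, Sf satisfies the triangular recurrence
  Sf(n+1,k) = Sf(n,k-1) + F_k Sf(n,k).  At q = 1 we have F_k \<equiv> 1 + (k-2) p modulo p^2,
  so the constant terms in p obey Pascal's rule, Sf(n,k)(0,1) = C(n-1,k-1), and the
  coefficients of p obey the same rule with the inhomogeneity (k-2) C(n-1,k-1),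
  which is solved by C(k-1,2) C(n-1,k).\<close>

fun fib_stirling :: "nat \<Rightarrow> nat \<Rightarrow> int poly poly" where
  "fib_stirling 0 k = (if k = 0 then 1 else 0)"
| "fib_stirling (Suc n) k =
     (case k of 0 \<Rightarrow> 0 | Suc j \<Rightarrow> fib_stirling n j) + Fpq k * fib_stirling n k"

lemma fib_stirling_eq_0: "n < k \<Longrightarrow> fib_stirling n k = 0"
  by (induction n arbitrary: k) (auto split: nat.split)

lemma fib_stirling_Suc_0: "fib_stirling (Suc n) 0 = 0"
  by simp

lemma ffac_Suc: "ffac (Suc k) = ffac k * [:- Fpq k, 1:]"
  by (cases k) (simp_all add: ffac_def prod.atLeastLessThan_Suc mult.assoc)

lemma degree_ffac: "degree (ffac k) = k" and lead_coeff_ffac: "lead_coeff (ffac k) = 1"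
proof (induction k)
  case 0
  show "degree (ffac 0) = 0" and "lead_coeff (ffac 0) = 1" by (simp_all add: ffac_def)
next
  case (Suc k)
  then have "ffac k \<noteq> 0" by auto
  then have "degree (ffac (Suc k)) = degree (ffac k) + 1"
    unfolding ffac_Suc by (subst degree_mult_eq) simp_all
  moreover have "lead_coeff (ffac (Suc k)) = lead_coeff (ffac k)"
    unfolding ffac_Suc lead_coeff_mult by simp
  ultimately show "degree (ffac (Suc k)) = Suc k" and "lead_coeff (ffac (Suc k)) = 1"
    using Suc.IH by simp_all
qed

lemma x_times_ffac: "[:0, 1:] * ffac k = ffac (Suc k) + smult (Fpq k) (ffac k)"
  by (simp add: ffac_Suc algebra_simps)

lemma monom_eq_sum_fib_stirling_ffac:
  "monom 1 n = (\<Sum>k\<le>n. smult (fib_stirling n k) (ffac k))"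
proof (induction n)
  case 0
  then show ?case by (simp add: ffac_def)
next
  case (Suc n)
  have "monom 1 (Suc n) = [:0, 1:] * monom (1 :: int poly poly) n"
    by (simp add: monom_Suc)
  also have "\<dots> = (\<Sum>k\<le>n. smult (fib_stirling n k) ([:0, 1:] * ffac k))"
    by (simp add: Suc sum_distrib_left mult_smult_right)
  also have "\<dots> = (\<Sum>k\<le>n. smult (fib_stirling n k) (ffac (Suc k)))
                  + (\<Sum>k\<le>n. smult (Fpq k * fib_stirling n k) (ffac k))"
    unfolding x_times_ffac smult_add_right smult_smult sum.distrib by (simp add: mult.commute)
  also have "(\<Sum>k\<le>n. smult (Fpq k * fib_stirling n k) (ffac k))
           = (\<Sum>k\<le>Suc n. smult (Fpq k * fib_stirling n k) (ffac k))"
    by (simp add: fib_stirling_eq_0)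
  also have "(\<Sum>k\<le>n. smult (fib_stirling n k) (ffac (Suc k)))
           = (\<Sum>k\<le>Suc n. smult (case k of 0 \<Rightarrow> 0 | Suc j \<Rightarrow> fib_stirling n j) (ffac k))"
    by (simp add: sum.atMost_Suc_shift del: sum.atMost_Suc)
  finally show ?case
    by (simp add: sum.distrib[symmetric] smult_add_left)
qed

lemma sum_smult_ffac_eq_0_imp:
  assumes "(\<Sum>k\<le>n. smult (c k) (ffac k)) = 0" and "k \<le> n"
  shows "c k = 0"
  using assms
proof (induction n arbitrary: k)
  case 0
  then show ?case by (simp add: ffac_def)
next
  case (Suc n)
  have "coeff (\<Sum>k\<le>Suc n. smult (c k) (ffac k)) (Suc n) = c (Suc n)"
    using lead_coeff_ffac[of "Suc n"]
    by (simp add: coeff_sum coeff_eq_0 degree_ffac)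
  with Suc.prems have top: "c (Suc n) = 0" by simp
  with Suc.prems have "(\<Sum>k\<le>n. smult (c k) (ffac k)) = 0" by simp
  with Suc top show ?case by (cases "k = Suc n") auto
qed

lemma Sf_eq_fib_stirling: "Sf n k = fib_stirling n k"
proof -
  have "(THE c. monom 1 n = (\<Sum>j\<le>n. [:c j:] * ffac j) \<and> (\<forall>j>n. c j = 0))
        = fib_stirling n"
  proof (rule the_equality)
    show "monom 1 n = (\<Sum>j\<le>n. [:fib_stirling n j:] * ffac j) \<and> (\<forall>j>n. fib_stirling n j = 0)"
      using monom_eq_sum_fib_stirling_ffac fib_stirling_eq_0 by simp
  next
    fix c
    assume c: "monom 1 n = (\<Sum>j\<le>n. [:c j:] * ffac j) \<and> (\<forall>j>n. c j = 0)"
    then have "(\<Sum>j\<le>n. smult (c j - fib_stirling n j) (ffac j)) = 0"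
      using monom_eq_sum_fib_stirling_ffac[of n]
      by (simp add: smult_diff_left sum_subtractf)
    then have "c j = fib_stirling n j" if "j \<le> n" for j
      using sum_smult_ffac_eq_0_imp that by fastforce
    moreover have "c j = fib_stirling n j" if "n < j" for j
      using c fib_stirling_eq_0 that by simp
    ultimately show "c = fib_stirling n"
      by (meson ext not_le)
  qed
  then show ?thesis unfolding Sf_def by simp
qed

lemma coeff_mult_1:
  fixes a b :: "'a::comm_semiring_0 poly"
  shows "coeff (a * b) 1 = coeff a 0 * coeff b 1 + coeff a 1 * coeff b 0"
  by (simp add: coeff_mult)

lemma poly_Fpq_q1_Suc_Suc_Suc:
  "poly (Fpq (Suc (Suc (Suc m)))) 1 = poly (Fpq (Suc (Suc m))) 1 + [:0, 1:] * poly (Fpq (Suc m)) 1"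
  by (simp add: pvar_def qvar_def)

lemma coeff_0_Fpq_q1: "0 < m \<Longrightarrow> coeff (poly (Fpq m) 1) 0 = 1"
proof (induction m rule: Fpq.induct)
  case (4 m)
  then show ?case unfolding poly_Fpq_q1_Suc_Suc_Suc by simp
qed (simp_all add: qvar_def)

lemma coeff_1_Fpq_q1: "coeff (poly (Fpq m) 1) 1 = int (m - 2)"
proof (induction m rule: Fpq.induct)
  case (4 m)
  then show ?case
    unfolding poly_Fpq_q1_Suc_Suc_Suc coeff_add coeff_mult_1 by (simp add: coeff_0_Fpq_q1)
qed (simp_all add: qvar_def)

lemma poly_fib_stirling_q1_Suc_Suc:
  "poly (fib_stirling (Suc n) (Suc k)) 1
   = poly (fib_stirling n k) 1 + poly (Fpq (Suc k)) 1 * poly (fib_stirling n (Suc k)) 1"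
  by simp

lemma coeff_0_fib_stirling_q1:
  "coeff (poly (fib_stirling (Suc n) (Suc k)) 1) 0 = int (n choose k)"
proof (induction n arbitrary: k)
  case 0
  then show ?case by (cases k) (simp_all add: qvar_def)
next
  case (Suc n)
  have "coeff (poly (fib_stirling (Suc (Suc n)) (Suc k)) 1) 0
      = coeff (poly (fib_stirling (Suc n) k) 1) 0
        + coeff (poly (fib_stirling (Suc n) (Suc k)) 1) 0"
    unfolding poly_fib_stirling_q1_Suc_Suc coeff_add coeff_mult_0
    by (simp only: coeff_0_Fpq_q1 zero_less_Suc mult_1)
  also have "\<dots> = int (Suc n choose k)"
    using Suc.IH by (cases k) (simp_all del: fib_stirling.simps add: fib_stirling_Suc_0)
  finally show ?case .
qed

lemma coeff_1_fib_stirling_q1_Suc: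
  "coeff (poly (fib_stirling (Suc n) k) 1) 1 = int ((k - 1) choose 2) * int (n choose k)"
proof (induction n arbitrary: k)
  case 0
  then show ?case by (cases k) (simp_all add: qvar_def)
next
  case (Suc n)
  show ?case
  proof (cases k)
    case 0
    then show ?thesis by (simp only: fib_stirling_Suc_0) simp
  next
    case (Suc j)
    have choose_2_Suc: "int (j choose 2) = int ((j - 1) choose 2) + int (j - 1)"
      by (cases j) (simp_all add: numeral_2_eq_2)
    have "coeff (poly (fib_stirling (Suc (Suc n)) (Suc j)) 1) 1
        = coeff (poly (fib_stirling (Suc n) j) 1) 1
          + coeff (poly (fib_stirling (Suc n) (Suc j)) 1) 1
          + int (j - 1) * coeff (poly (fib_stirling (Suc n) (Suc j)) 1) 0"
      unfolding poly_fib_stirling_q1_Suc_Suc coeff_add coeff_mult_1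
      by (simp only: coeff_0_Fpq_q1 coeff_1_Fpq_q1 zero_less_Suc) simp
    also have "\<dots> = int ((j - 1) choose 2) * int (n choose j)
                   + int (j choose 2) * int (n choose Suc j) + int (j - 1) * int (n choose j)"
      by (simp only: Suc.IH coeff_0_fib_stirling_q1) simp
    also have "\<dots> = int (j choose 2) * int (Suc n choose Suc j)"
      by (simp add: choose_2_Suc algebra_simps)
    finally show ?thesis using \<open>k = Suc j\<close> by simp
  qed
qed

lemma coeff_1_fib_stirling_q1:
  "coeff (poly (fib_stirling n k) 1) 1 = int ((k - 1) choose 2) * int ((n - 1) choose k)"
proof (cases n)
  case 0
  then show ?thesis by simp
next
  case (Suc m)
  then show ?thesis using coeff_1_fib_stirling_q1_Suc[of m k] by (simp only: diff_Suc_1)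
qed

theorem theorem12:
  fixes n k :: nat
  assumes "3 \<le> k" and "k \<le> n"
  shows "coeff (poly (Sf n k) 1) 1 = int ((k - 1) choose 2) * int ((n - 1) choose k)"
  unfolding Sf_eq_fib_stirling by (rule coeff_1_fib_stirling_q1)

end
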